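(* Let $0=t_0<t_1<t_2<\dots<t_m$ be real numbers and let $p_1,\dots,p_m\ge 0$ with $\sum_{j=1}^m p_j=1$. For $j\in[m]$ let $q_j=\sum_{k=j}^m p_k$, and let $\|T\|_2=\sqrt{\sum_{j=1}^m p_jt_j^2}$. Then $$\sum_{j=1}^m (t_j-t_{j-1})\sqrt{q_j}\ \le\ t_1+\|T\|_2\sqrt{\ln(t_m/t_1)}.$$
   Context: Interpretation: $t_j$ are the possible stopping times of an algorithm, $p_j$ the probability of stopping at time $t_j$, $q_j$ the probability of stopping at time $\ge t_j$, and $\|T\|_2$ the $\ell_2$-averaged stopping time. *)

theory Defs
  imports Complex_Main
begin

end

theory Submission
  imports Defs "HOL-Analysis.Analysis"
begin

text \<open>
  Since q_1 = 1, the first summand is t_1. For j \<ge> 2 write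
  (t_j - t_{j-1}) sqrt q_j = sqrt ((t_j - t_{j-1}) / t_j) * sqrt ((t_j - t_{j-1}) t_j q_j)
  and apply Cauchy--Schwarz. The first factors have squared sum at most ln (t_m / t_1),
  because 1 - s/t \<le> ln t - ln s telescopes. Since (t_j - t_{j-1}) t_j \<le> t_j^2 - t_{j-1}^2,
  the second ones have squared sum at most the sum of (t_j^2 - t_{j-1}^2) q_j, which by
  summation by parts is the sum of p_j t_j^2, i.e. ||T||_2^2.
\<close>

lemma strict_increments_imp_less:
  fixes t :: "nat \<Rightarrow> 'a::order"
  assumes "\<And>j. j < m \<Longrightarrow> t j < t (Suc j)" "i < j" "j \<le> m"
  shows "t i < t j"
  using assms(2,3)
proof (induction j)
  case (Suc j)
  then show ?case
    using assms(1)[of j] by (cases "i = j") (auto intro: order.strict_trans)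
qed simp

lemma sum_increments_mult_tail_sums:
  fixes f p :: "nat \<Rightarrow> real"
  shows "(\<Sum>j=1..n. (f j - f (j - 1)) * (\<Sum>k=j..n. p k)) = (\<Sum>k=1..n. p k * (f k - f 0))"
proof (induction n)
  case 0
  show ?case by simp
next
  case (Suc n)
  have "(\<Sum>k=j..Suc n. p k) = (\<Sum>k=j..n. p k) + p (Suc n)" if "j \<in> {1..Suc n}" for j
    using that by (simp add: sum.cl_ivl_Suc)
  then have "(\<Sum>j=1..Suc n. (f j - f (j - 1)) * (\<Sum>k=j..Suc n. p k))
      = (\<Sum>j=1..Suc n. (f j - f (j - 1)) * (\<Sum>k=j..n. p k) + (f j - f (j - 1)) * p (Suc n))"
    by (intro sum.cong) (simp_all add: distrib_left)
  also have "\<dots> = (\<Sum>j=1..Suc n. (f j - f (j - 1)) * (\<Sum>k=j..n. p k))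
        + (\<Sum>j=1..Suc n. f j - f (j - 1)) * p (Suc n)"
    by (simp only: sum.distrib sum_distrib_right)
  also have "\<dots> = (\<Sum>k=1..n. p k * (f k - f 0)) + (f (Suc n) - f 0) * p (Suc n)"
    using Suc.IH sum_telescope''[of 0 "Suc n" f] by simp
  finally show ?case by simp
qed

lemma weighted_Cauchy_Schwarz_sqrt:
  fixes d t q :: "'a \<Rightarrow> real"
  assumes "\<And>j. j \<in> A \<Longrightarrow> d j \<ge> 0" "\<And>j. j \<in> A \<Longrightarrow> t j > 0" "\<And>j. j \<in> A \<Longrightarrow> q j \<ge> 0"
  shows "(\<Sum>j\<in>A. d j * sqrt (q j)) \<le> sqrt (\<Sum>j\<in>A. d j / t j) * sqrt (\<Sum>j\<in>A. d j * t j * q j)"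
proof -
  have nonneg: "0 \<le> d j / t j" "0 \<le> d j * t j * q j" if "j \<in> A" for j
    using assms(1,3)[OF that] less_imp_le[OF assms(2)[OF that]] by simp_all
  have "d j * sqrt (q j) = \<bar>sqrt (d j / t j)\<bar> * \<bar>sqrt (d j * t j * q j)\<bar>" if "j \<in> A" for j
  proof -
    have "\<bar>sqrt (d j / t j)\<bar> * \<bar>sqrt (d j * t j * q j)\<bar> = sqrt (d j / t j * (d j * t j * q j))"
      using nonneg[OF that] by (simp only: abs_of_nonneg real_sqrt_ge_zero real_sqrt_mult[symmetric])
    also have "d j / t j * (d j * t j * q j) = (d j)\<^sup>2 * q j"
      using assms(2)[OF that] by (simp add: field_simps power2_eq_square)
    finally show ?thesis
      using assms(1)[OF that] by (simp add: real_sqrt_mult)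
  qed
  then have "(\<Sum>j\<in>A. d j * sqrt (q j))
      \<le> L2_set (\<lambda>j. sqrt (d j / t j)) A * L2_set (\<lambda>j. sqrt (d j * t j * q j)) A"
    using L2_set_mult_ineq[of "\<lambda>j. sqrt (d j / t j)" "\<lambda>j. sqrt (d j * t j * q j)" A] by simp
  also have "\<dots> = sqrt (\<Sum>j\<in>A. d j / t j) * sqrt (\<Sum>j\<in>A. d j * t j * q j)"
    unfolding L2_set_def using nonneg by simp
  finally show ?thesis .
qed

lemma diff_div_le_ln_diff:
  fixes s t :: real
  assumes "0 < s" "s \<le> t"
  shows "(t - s) / t \<le> ln t - ln s"
proof -
  have "ln (s / t) \<le> s / t - 1"
    using assms by (intro ln_le_minus_one) simp
  then show ?thesis
    using assms by (simp add: ln_div diff_divide_distrib)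
qed

lemma sum_increments_div_le_ln:
  fixes t :: "nat \<Rightarrow> real"
  assumes "1 \<le> m" "\<And>j. 1 \<le> j \<Longrightarrow> j \<le> m \<Longrightarrow> 0 < t j"
    and "\<And>j. 1 \<le> j \<Longrightarrow> j < m \<Longrightarrow> t j \<le> t (Suc j)"
  shows "(\<Sum>j=2..m. (t j - t (j - 1)) / t j) \<le> ln (t m / t 1)"
proof -
  have "(\<Sum>j=2..m. (t j - t (j - 1)) / t j) \<le> (\<Sum>j=2..m. ln (t j) - ln (t (j - 1)))"
  proof (rule sum_mono)
    fix j assume "j \<in> {2..m}"
    then show "(t j - t (j - 1)) / t j \<le> ln (t j) - ln (t (j - 1))"
      using assms(2)[of "j - 1"] assms(3)[of "j - 1"] by (intro diff_div_le_ln_diff) auto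
  qed
  also have "\<dots> = ln (t m / t 1)"
    using sum_telescope''[OF assms(1), of "\<lambda>j. ln (t j)"] assms(2)[OF assms(1) order.refl] assms(2)[of 1] assms(1)
    by (simp add: ln_div numeral_2_eq_2)
  finally show ?thesis .
qed

lemma sum_increments_mult_tail_sums_le:
  fixes t p :: "nat \<Rightarrow> real"
  assumes "t 0 = 0" "\<And>j. j < m \<Longrightarrow> 0 \<le> t j \<and> t j \<le> t (Suc j)"
    and "\<And>j. 1 \<le> j \<Longrightarrow> j \<le> m \<Longrightarrow> 0 \<le> p j"
  shows "(\<Sum>j=2..m. (t j - t (j - 1)) * t j * (\<Sum>k=j..m. p k)) \<le> (\<Sum>j=1..m. p j * (t j)\<^sup>2)"
proof -
  have tail_nonneg: "0 \<le> (\<Sum>k=j..m. p k)" if "1 \<le> j" for j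
    using that assms(3) by (intro sum_nonneg) auto
  have "(\<Sum>j=2..m. (t j - t (j - 1)) * t j * (\<Sum>k=j..m. p k))
      \<le> (\<Sum>j=2..m. ((t j)\<^sup>2 - (t (j - 1))\<^sup>2) * (\<Sum>k=j..m. p k))"
  proof (rule sum_mono)
    fix j assume j: "j \<in> {2..m}"
    have "(t j - t (j - 1)) * t j \<le> (t j)\<^sup>2 - (t (j - 1))\<^sup>2"
    proof -
      have "0 \<le> t (j - 1)" "t (j - 1) \<le> t j"
        using j assms(2)[of "j - 1"] by auto
      then show ?thesis
        by (simp add: power2_eq_square algebra_simps mult_right_mono)
    qed
    then show "(t j - t (j - 1)) * t j * (\<Sum>k=j..m. p k) \<le> ((t j)\<^sup>2 - (t (j - 1))\<^sup>2) * (\<Sum>k=j..m. p k)"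
      using j tail_nonneg[of j] by (intro mult_right_mono) auto
  qed
  also have "\<dots> \<le> ((t 1)\<^sup>2 - (t 0)\<^sup>2) * (\<Sum>k=1..m. p k)
      + (\<Sum>j=2..m. ((t j)\<^sup>2 - (t (j - 1))\<^sup>2) * (\<Sum>k=j..m. p k))"
    using tail_nonneg[of 1] assms(1) by simp
  also have "\<dots> = (\<Sum>j=1..m. ((t j)\<^sup>2 - (t (j - 1))\<^sup>2) * (\<Sum>k=j..m. p k))"
    by (cases m) (simp_all add: sum.atLeast_Suc_atMost numeral_2_eq_2)
  also have "\<dots> = (\<Sum>j=1..m. p j * (t j)\<^sup>2)"
    using sum_increments_mult_tail_sums[where f = "\<lambda>j. (t j)\<^sup>2" and n = m and p = p] assms(1) by simp
  finally show ?thesis .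
qed

theorem mainTheorem8:
  fixes m :: nat and t p :: "nat \<Rightarrow> real"
  assumes m: "m \<ge> 1"
    and t0: "t 0 = 0"
    and tinc: "\<And>j. j < m \<Longrightarrow> t j < t (Suc j)"
    and pnn: "\<And>j. 1 \<le> j \<Longrightarrow> j \<le> m \<Longrightarrow> p j \<ge> 0"
    and psum: "(\<Sum>j=1..m. p j) = 1"
  shows "(\<Sum>j=1..m. (t j - t (j - 1)) * sqrt (\<Sum>k=j..m. p k))
         \<le> t 1 + sqrt (\<Sum>j=1..m. p j * (t j)\<^sup>2) * sqrt (ln (t m / t 1))"
proof -
  have tpos: "0 < t j" if "1 \<le> j" "j \<le> m" for j
    using strict_increments_imp_less[of m t 0 j, OF tinc] that t0 by simp
  have tnonneg: "0 \<le> t j" if "j \<le> m" for j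
    using tpos[of j] t0 that by (cases j) auto
  have tmono: "t (j - 1) \<le> t j" if "1 \<le> j" "j \<le> m" for j
    using tinc[of "j - 1"] that by fastforce
  define d where "d j = t j - t (j - 1)" for j
  define q where "q j = (\<Sum>k=j..m. p k)" for j
  have "(\<Sum>j=1..m. (t j - t (j - 1)) * sqrt (\<Sum>k=j..m. p k)) = t 1 + (\<Sum>j=2..m. d j * sqrt (q j))"
    using m psum t0 by (simp add: sum.atLeast_Suc_atMost numeral_2_eq_2 d_def q_def)
  also have "\<dots> \<le> t 1 + sqrt (\<Sum>j=2..m. d j / t j) * sqrt (\<Sum>j=2..m. d j * t j * q j)"
    using tmono tpos pnn unfolding d_def q_def
    by (intro add_left_mono weighted_Cauchy_Schwarz_sqrt) (auto intro: sum_nonneg)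
  also have "\<dots> \<le> t 1 + sqrt (ln (t m / t 1)) * sqrt (\<Sum>j=1..m. p j * (t j)\<^sup>2)"
  proof -
    have "0 \<le> d j / t j \<and> 0 \<le> d j * t j * q j" if "j \<in> {2..m}" for j
      unfolding d_def q_def using that tmono[of j] tpos[of j] pnn
      by (auto intro!: sum_nonneg mult_nonneg_nonneg)
    then have "0 \<le> (\<Sum>j=2..m. d j / t j)" "0 \<le> (\<Sum>j=2..m. d j * t j * q j)"
      by (auto intro: sum_nonneg)
    moreover have "(\<Sum>j=2..m. d j / t j) \<le> ln (t m / t 1)"
      unfolding d_def using m tpos tinc by (intro sum_increments_div_le_ln) (auto intro: less_imp_le)
    moreover have "(\<Sum>j=2..m. d j * t j * q j) \<le> (\<Sum>j=1..m. p j * (t j)\<^sup>2)"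
      unfolding d_def q_def using t0 tnonneg tinc pnn
      by (intro sum_increments_mult_tail_sums_le) (auto intro: less_imp_le)
    ultimately show ?thesis
      by (intro add_left_mono mult_mono real_sqrt_le_mono) auto
  qed
  finally show ?thesis
    by (simp add: mult.commute)
qed

end
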